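(* Let $Z$ be a separable metric space on which a group $G$ acts by isometries such that some $G$-orbit is dense in $Z$. If there exists a finite, nonzero, $G$-invariant Borel measure $\mu$ on $Z$, then $Z$ is totally bounded. *)

theory Defs
  imports "HOL-Probability.Probability" "HOL-Algebra.Group_Action"
begin

end

theory Submission
  imports Defs
begin

text \<open>If \<open>Z\<close> is not totally bounded, the dense orbit contains arbitrarily large \<open>\<epsilon>\<close>-separated
  finite sets, whose \<open>\<epsilon>/2\<close>-balls are disjoint. Isometries preserve balls and \<open>\<mu>\<close> is invariant,
  so all these balls have the measure of a single ball around the base point; by separability
  that common value is positive. Hence \<open>\<mu>(Z)\<close> would be infinite.\<close>

lemma not_totally_bounded_far_point:
  fixes S :: "'a::metric_space set"
  assumes "\<not> totally_bounded S"
  obtains e where "e > 0" "\<And>F. finite F \<Longrightarrow> \<exists>x\<in>S. \<forall>f\<in>F. e \<le> dist f x"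
proof -
  from assms obtain e where "e > 0"
    and "\<And>F. finite F \<Longrightarrow> \<not> S \<subseteq> (\<Union>f\<in>F. {y. dist f y < e})"
    unfolding totally_bounded_metric by blast
  then show thesis by (intro that) (force simp: not_less)+
qed

lemma separated_subsets_if_not_totally_bounded:
  fixes S D :: "'a::metric_space set"
  assumes "\<not> totally_bounded S" and "S \<subseteq> closure D"
  obtains e where "e > 0"
    "\<And>n. \<exists>F. finite F \<and> card F = n \<and> F \<subseteq> D \<and> pairwise (\<lambda>x y. e \<le> dist x y) F"
proof -
  obtain e where e: "e > 0" and far: "\<And>F. finite F \<Longrightarrow> \<exists>x\<in>S. \<forall>f\<in>F. e \<le> dist f x"
    using not_totally_bounded_far_point[OF assms(1)] by blast
  have "\<exists>F. finite F \<and> card F = n \<and> F \<subseteq> D \<and> pairwise (\<lambda>x y. e/2 \<le> dist x y) F" for n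
  proof (induction n)
    case 0
    show ?case by (intro exI[of _ "{}"]) auto
  next
    case (Suc n)
    then obtain F where F: "finite F" "card F = n" "F \<subseteq> D" "pairwise (\<lambda>x y. e/2 \<le> dist x y) F"
      by blast
    obtain x where "x \<in> S" and x: "\<forall>f\<in>F. e \<le> dist f x"
      using far[OF F(1)] by blast
    then obtain y where "y \<in> D" and xy: "dist y x < e/2"
      using assms(2) closure_approachable[of x D] \<open>e > 0\<close> by (meson half_gt_zero subsetD)
    have y_far: "e/2 \<le> dist f y" if "f \<in> F" for f
      using x that xy dist_triangle[of f x y] by (auto simp: dist_commute)
    then have "y \<notin> F"
      using \<open>e > 0\<close> by fastforce
    with F y_far \<open>y \<in> D\<close> show ?case
      by (intro exI[of _ "insert y F"]) (auto simp: pairwise_insert dist_commute)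
  qed
  then show thesis
    using e by (intro that[of "e/2"]) auto
qed

lemma disjoint_family_on_balls:
  fixes F :: "'a::metric_space set"
  assumes "pairwise (\<lambda>x y. 2 * r \<le> dist x y) F"
  shows "disjoint_family_on (\<lambda>x. ball x r) F"
  unfolding disjoint_family_on_def
proof (intro ballI impI)
  fix x y assume "x \<in> F" "y \<in> F" "x \<noteq> y"
  then have "2 * r \<le> dist x y"
    using assms by (auto simp: pairwise_def)
  then show "ball x r \<inter> ball y r = {}"
    using dist_triangle_less_add[of x _ r y r] by (auto simp: dist_commute)
qed

lemma (in finite_measure) card_mult_le_measure_space:
  fixes c :: real
  assumes "finite F" "disjoint_family_on A F" "A ` F \<subseteq> sets M"
    and "\<And>x. x \<in> F \<Longrightarrow> c \<le> measure M (A x)"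
  shows "card F * c \<le> measure M (space M)"
proof -
  have "card F * c = (\<Sum>x\<in>F. c)"
    by simp
  also have "\<dots> \<le> (\<Sum>x\<in>F. measure M (A x))"
    using assms(4) by (rule sum_mono)
  also have "\<dots> = measure M (\<Union>x\<in>F. A x)"
    using assms(1-3) by (intro finite_measure_finite_Union[symmetric]) auto
  also have "\<dots> \<le> measure M (space M)"
    using assms(3) by (intro bounded_measure)
  finally show ?thesis .
qed

lemma exists_ball_positive_measure:
  fixes M :: "'a::metric_space measure" and D :: "'a set"
  assumes "sets M = sets borel" "countable D" "closure D = UNIV"
    and "emeasure M UNIV \<noteq> 0" and "r > 0"
  shows "\<exists>x. emeasure M (ball x r) \<noteq> 0"
proof (rule ccontr)
  assume "\<not> ?thesis"
  then have "(\<Union>d\<in>D. ball d r) \<in> null_sets M"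
    using assms(1,2) by (intro null_sets_UN') (auto simp: null_sets_def)
  moreover have "(\<Union>d\<in>D. ball d r) = UNIV"
    using assms(3,5) closure_approachable[of _ D] by (fastforce simp: dist_commute)
  ultimately show False
    using assms(4) by (simp add: null_sets_def)
qed

lemma exists_ball_positive_measure_at_dense:
  fixes M :: "'a::metric_space measure" and D E :: "'a set"
  assumes "sets M = sets borel" "countable D" "closure D = UNIV" "closure E = UNIV"
    and "emeasure M UNIV \<noteq> 0" and "r > 0"
  shows "\<exists>y\<in>E. emeasure M (ball y r) \<noteq> 0"
proof -
  obtain x where x: "emeasure M (ball x (r/2)) \<noteq> 0"
    using exists_ball_positive_measure[OF assms(1-3,5)] \<open>r > 0\<close> by (meson half_gt_zero)
  obtain y where "y \<in> E" "dist y x < r/2"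
    using closure_approachable[of x E] assms(4) \<open>r > 0\<close> by (metis UNIV_I half_gt_zero)
  then have "ball x (r/2) \<subseteq> ball y r"
    using dist_triangle_half_l[of y x r] by (auto simp: dist_commute)
  then have "emeasure M (ball x (r/2)) \<le> emeasure M (ball y r)"
    using assms(1) by (intro emeasure_mono) auto
  with x \<open>y \<in> E\<close> show ?thesis
    by (metis le_zero_eq)
qed

lemma emeasure_ball_image_isometry:
  assumes isometry: "\<And>x y. dist (f x) (f y) = dist x y"
    and invariant: "\<forall>A \<in> sets borel. emeasure M (f -` A) = emeasure M A"
  shows "emeasure M (ball (f x) r) = emeasure M (ball x r)"
proof -
  have "f -` ball (f x) r = ball x r"
    by (auto simp: isometry)
  then show ?thesis
    using invariant by (metis sets_lborel borel_open open_ball)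
qed

theorem mainTheorem6:
  fixes G :: "('g, 'b) monoid_scheme" (structure)
    and \<phi> :: "'g \<Rightarrow> 'z::metric_space \<Rightarrow> 'z"
    and \<mu> :: "'z measure"
  assumes separable: "\<exists>D :: 'z set. countable D \<and> closure D = UNIV"
    and action: "group_action G UNIV \<phi>"
    and isometries: "\<forall>g \<in> carrier G. \<forall>x y. dist (\<phi> g x) (\<phi> g y) = dist x y"
    and dense_orbit: "\<exists>z. closure (orbit G \<phi> z) = UNIV"
    and borel: "sets \<mu> = sets borel"
    and finite: "emeasure \<mu> UNIV < \<infinity>"
    and nonzero: "emeasure \<mu> UNIV \<noteq> 0"
    and invariant: "\<forall>g \<in> carrier G. \<forall>A \<in> sets borel. emeasure \<mu> (\<phi> g -` A) = emeasure \<mu> A"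
  shows "totally_bounded (UNIV :: 'z set)"
proof (rule ccontr)
  assume not_bounded: "\<not> totally_bounded (UNIV :: 'z set)"
  have "space \<mu> = UNIV"
    using sets_eq_imp_space_eq[OF borel] by simp
  then interpret finite_measure \<mu>
    using finite by (intro finite_measureI) auto
  obtain z where z: "closure (orbit G \<phi> z) = UNIV"
    using dense_orbit by blast
  obtain e where "e > 0" and separated:
    "\<And>n. \<exists>F. finite F \<and> card F = n \<and> F \<subseteq> orbit G \<phi> z \<and> pairwise (\<lambda>x y. e \<le> dist x y) F"
    using separated_subsets_if_not_totally_bounded[OF not_bounded, of "orbit G \<phi> z"] z by auto
  have ball_orbit: "emeasure \<mu> (ball y r) = emeasure \<mu> (ball z r)" if "y \<in> orbit G \<phi> z" for y r
    using that isometries invariant emeasure_ball_image_isometry[of "\<phi> _" \<mu>]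
    by (auto simp: orbit_def)
  define c where "c = measure \<mu> (ball z (e/2))"
  have "c > 0"
    using separable z borel nonzero \<open>e > 0\<close> ball_orbit
      exists_ball_positive_measure_at_dense[of \<mu> _ "orbit G \<phi> z" "e/2"]
    by (fastforce simp: c_def emeasure_eq_measure zero_less_measure_iff)
  obtain n :: nat where n: "measure \<mu> UNIV / c < n"
    using reals_Archimedean2 by blast
  obtain F where F: "finite F" "card F = n" "F \<subseteq> orbit G \<phi> z" "pairwise (\<lambda>x y. e \<le> dist x y) F"
    using separated by blast
  have "card F * c \<le> measure \<mu> (space \<mu>)"
    using F borel ball_orbit disjoint_family_on_balls[of "e/2" F]
    by (intro card_mult_le_measure_space) (auto simp: c_def measure_def)
  then show False
    using n F(2) \<open>c > 0\<close> \<open>space \<mu> = UNIV\<close> by (simp add: divide_less_eq)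
qed

end
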